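(* Fix $p$ with $0<p<1$ and for each positive integer $d$ define $\theta(d)=\dfrac{p}{d-(d-1)p}$. For $\mathbf{U}\in\mathbb{R}^{m\times d}$, $\mathbf{V}\in\mathbb{R}^{n\times d}$ with columns $\mathbf{u}_k,\mathbf{v}_k$, let $\Omega_{\mathrm{dropout}}(\mathbf{U},\mathbf{V})=\sum_{k=1}^d\|\mathbf{u}_k\|_2^2\|\mathbf{v}_k\|_2^2$. Define, for $\mathbf{X}\in\mathbb{R}^{m\times n}$, $$\Lambda(\mathbf{X})=\inf_{d,\mathbf{U},\mathbf{V}}\ \frac{1-\theta(d)}{\theta(d)}\,\Omega_{\mathrm{dropout}}(\mathbf{U},\mathbf{V})\quad\text{subject to } d\ge\operatorname{rank}(\mathbf{X}),\ \mathbf{U}\in\mathbb{R}^{m\times d},\ \mathbf{V}\in\mathbb{R}^{n\times d},\ \mathbf{U}\mathbf{V}^\top=\mathbf{X}.$$ Then the lower convex envelope of $\Lambda$ is $\mathbf{X}\mapsto\frac{1-p}{p}\|\mathbf{X}\|_\star^2$.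
   Context: $\|\mathbf{X}\|_\star$ is the nuclear norm (sum of singular values). The lower convex envelope of a function $f$ is the pointwise supremum of all convex functions $g$ with $g\le f$. $\|\cdot\|_2$ is the Euclidean norm. *)

theory Defs
  imports "HOL-Analysis.Analysis" "HOL-Computational_Algebra.Polynomial"
begin

definition theta :: "real \<Rightarrow> nat \<Rightarrow> real" where
  "theta p d = p / (real d - (real d - 1) * p)"

(* U V^T, where U has columns u 0 .. u (d-1) and V has columns v 0 .. v (d-1) *)
definition factor_prod :: "nat \<Rightarrow> (nat \<Rightarrow> real^'m) \<Rightarrow> (nat \<Rightarrow> real^'n) \<Rightarrow> real^'n^'m" where
  "factor_prod d u v = (\<Sum>k<d. (\<chi> i j. u k $ i * v k $ j))"

definition omega_dropout :: "nat \<Rightarrow> (nat \<Rightarrow> real^'m) \<Rightarrow> (nat \<Rightarrow> real^'n) \<Rightarrow> real" where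
  "omega_dropout d u v = (\<Sum>k<d. (norm (u k))\<^sup>2 * (norm (v k))\<^sup>2)"

definition Lambda :: "real \<Rightarrow> real^'n^'m \<Rightarrow> real" where
  "Lambda p X = Inf { (1 - theta p d) / theta p d * omega_dropout d u v
      | d u v. d \<ge> 1 \<and> d \<ge> rank X \<and> factor_prod d u v = X }"

definition char_poly :: "real^'n^'n \<Rightarrow> real poly" where
  "char_poly A = det (\<chi> i j. (if i = j then [:0, 1:] else 0) - [:A $ i $ j:])"

(* nuclear norm: sum of singular values, i.e. sum of sqrt of the eigenvalues of X^T X
   counted with algebraic multiplicity *)
definition nuclear_norm :: "real^'n^'m \<Rightarrow> real" where
  "nuclear_norm X = (let q = char_poly (transpose X ** X) in
     (\<Sum>e\<in>{x. poly q x = 0}. real (order e q) * sqrt e))"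

definition lower_convex_envelope :: "('a::real_vector \<Rightarrow> real) \<Rightarrow> 'a \<Rightarrow> real" where
  "lower_convex_envelope f x = (SUP g \<in> {g. convex_on UNIV g \<and> (\<forall>y. g y \<le> f y)}. g x)"

end

(*
  Lambda(X) equals (1 - p)/p * |X|_*^2 exactly; as this function is convex, it is its own lower
  convex envelope. Since (1 - theta d)/theta d = d (1 - p)/p, the claim is that the least value of
  d * sum_k |u_k|^2 |v_k|^2 over factorizations X = sum_{k<d} u_k v_k^T is |X|_*^2.

  Lower bound: some contraction W has <W, X> = |X|_*, whence |X|_* <= sum_k |u_k| |v_k|, and
  Cauchy-Schwarz gives (sum_k |u_k| |v_k|)^2 <= d * sum_k |u_k|^2 |v_k|^2.

  Upper bound: write the singular value decomposition as X = sum_j a_j b_j^T with both families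
  orthogonal and |a_j|^2 = |b_j|^2 = sigma_j. For each of the D = 2^n sign vectors eps put
  u_eps = D^(-1/2) sum_j eps_j a_j and v_eps = D^(-1/2) sum_j eps_j b_j. Averaging over all signs
  kills the cross terms a_i b_j^T (i ~= j), so sum_eps u_eps v_eps^T = X, while by Pythagoras
  |u_eps|^2 = |v_eps|^2 = |X|_*/D for every eps; this factorization attains the bound.

  The nuclear norm is defined through the characteristic polynomial of X^T X, so the singular
  value decomposition is derived from a spectral theorem for symmetric matrices, proved by
  maximizing the quadratic form on the unit sphere of invariant subspaces.
*)

theory Submission
  imports Defs
begin

section \<open>Spectral theorem for symmetric matrices\<close>

lemma symmetric_matrix_inner_commute:
  fixes A :: "real^'n^'n"
  assumes "transpose A = A"
  shows "inner (A *v x) y = inner x (A *v y)"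
  by (metis assms dot_lmul_matrix transpose_matrix_vector)

lemma rayleigh_maximizer_is_eigenvector:
  fixes A :: "real^'n^'n"
  assumes sym: "transpose A = A" and U: "subspace U" and xU: "x \<in> U" and AxU: "A *v x \<in> U"
    and nx: "norm x = 1"
    and max: "\<And>z. z \<in> U \<Longrightarrow> inner z (A *v z) \<le> inner x (A *v x) * (norm z)\<^sup>2"
  shows "A *v x = inner x (A *v x) *\<^sub>R x"
proof -
  define M where "M = inner x (A *v x)"
  \<comment> \<open>Moving x along the residual r raises the quadratic form to first order unless r = 0.\<close>
  define r where "r = A *v x - M *\<^sub>R x"
  define R where "R = inner r r"
  define c where "c = M * R - inner r (A *v r)"
  have rU: "r \<in> U" using U xU AxU by (simp add: r_def subspace_diff subspace_scale)
  have xx: "inner x x = 1" using nx by (simp add: norm_eq_1)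
  have xr: "inner x r = 0" by (simp add: r_def inner_diff_right M_def xx)
  have rAx: "inner r (A *v x) = R"
  proof -
    have "inner r (A *v x) = inner r (r + M *\<^sub>R x)" by (simp add: r_def)
    thus ?thesis using xr by (simp add: inner_add_right inner_commute R_def)
  qed
  have perturb: "2 * t * R \<le> t\<^sup>2 * c" for t
  proof -
    define z where "z = x + t *\<^sub>R r"
    have "inner x (A *v r) = inner r (A *v x)"
      using symmetric_matrix_inner_commute[OF sym, of x r] by (simp add: inner_commute)
    hence "inner z (A *v z) = M + 2 * t * R + t\<^sup>2 * inner r (A *v r)"
      by (simp add: z_def matrix_vector_right_distrib matrix_vector_mult_scaleR inner_add_left
          inner_add_right M_def rAx power2_eq_square algebra_simps)
    moreover have "(norm z)\<^sup>2 = 1 + t\<^sup>2 * R"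
      unfolding power2_norm_eq_inner using xr by (simp add: z_def inner_add_left inner_add_right xx
          inner_commute[of r x] R_def power2_eq_square)
    moreover have "z \<in> U" using U xU rU by (simp add: z_def subspace_add subspace_scale)
    ultimately have "M + 2 * t * R + t\<^sup>2 * inner r (A *v r) \<le> M * (1 + t\<^sup>2 * R)"
      using max[of z] by (simp add: M_def)
    thus ?thesis by (simp add: c_def algebra_simps)
  qed
  have "2 * R \<le> 0"
  proof (rule field_le_epsilon)
    fix e :: real assume "e > 0"
    define t where "t = e / (\<bar>c\<bar> + 1)"
    have t: "t > 0" using \<open>e > 0\<close> by (simp add: t_def)
    have "2 * R \<le> t * c"
      using perturb[of t] t by (simp add: power2_eq_square)
    also have "\<dots> \<le> t * (\<bar>c\<bar> + 1)" using t by (intro mult_left_mono) auto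
    finally show "2 * R \<le> 0 + e" using t by (simp add: t_def)
  qed
  hence "inner r r = 0" using inner_ge_zero[of r] by (simp add: R_def)
  hence "r = 0" by simp
  thus ?thesis by (simp add: r_def M_def)
qed

lemma symmetric_matrix_eigenvector_in_invariant_subspace:
  fixes A :: "real^'n^'n"
  assumes sym: "transpose A = A" and U: "subspace U" and nontriv: "U \<noteq> {0}"
    and inv: "\<And>x. x \<in> U \<Longrightarrow> A *v x \<in> U"
  obtains x c where "x \<in> U" "norm x = 1" "A *v x = c *\<^sub>R x"
proof -
  define K where "K = sphere 0 1 \<inter> U"
  obtain y where "y \<in> U" "y \<noteq> 0" using nontriv subspace_0[OF U] by auto
  hence "y /\<^sub>R norm y \<in> K" by (simp add: K_def subspace_scale[OF U])
  hence "K \<noteq> {}" by blast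
  moreover have "compact K" unfolding K_def by (intro compact_Int_closed compact_sphere closed_subspace U)
  moreover have "continuous_on K (\<lambda>x. inner x (A *v x))"
    by (intro continuous_intros linear_continuous_on matrix_vector_mul_linear bounded_linear_intros)
  ultimately have "\<exists>x\<in>K. \<forall>z\<in>K. inner z (A *v z) \<le> inner x (A *v x)"
    by (intro continuous_attains_sup)
  then obtain x where xK: "x \<in> K" and xmax: "\<And>z. z \<in> K \<Longrightarrow> inner z (A *v z) \<le> inner x (A *v x)"
    by blast
  have xU: "x \<in> U" and nx: "norm x = 1" using xK by (auto simp: K_def)
  have "inner z (A *v z) \<le> inner x (A *v x) * (norm z)\<^sup>2" if "z \<in> U" for z
  proof (cases "z = 0")
    case False
    hence "z /\<^sub>R norm z \<in> K" using that by (simp add: K_def subspace_scale[OF U])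
    hence "inner z (A *v z) / (norm z)\<^sup>2 \<le> inner x (A *v x)"
      by (auto dest!: xmax simp: matrix_vector_mult_scaleR power2_eq_square divide_inverse ac_simps)
    thus ?thesis using False by (simp add: pos_divide_le_eq)
  qed simp
  hence "A *v x = inner x (A *v x) *\<^sub>R x"
    by (rule rayleigh_maximizer_is_eigenvector[OF sym U xU inv[OF xU] nx])
  with that xU nx show ?thesis by blast
qed

lemma symmetric_matrix_orthonormal_eigenvectors:
  fixes A :: "real^'n^'n"
  assumes sym: "transpose A = A" and "k \<le> CARD('n)"
  shows "\<exists>S. finite S \<and> card S = k \<and> pairwise orthogonal S
           \<and> (\<forall>s\<in>S. norm s = 1 \<and> (\<exists>c. A *v s = c *\<^sub>R s))"
  using assms(2)
proof (induction k)
  case 0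
  show ?case by (intro exI[of _ "{}"]) auto
next
  case (Suc k)
  then obtain S where fS: "finite S" and cS: "card S = k" and oS: "pairwise orthogonal S"
    and eS: "\<forall>s\<in>S. norm s = 1 \<and> (\<exists>c. A *v s = c *\<^sub>R s)" by auto
  define U where "U = {y. \<forall>s\<in>S. orthogonal s y}"
  have U: "subspace U" unfolding U_def by (rule subspace_orthogonal_to_vectors)
  have "A *v y \<in> U" if "y \<in> U" for y
  proof -
    have "orthogonal s (A *v y)" if "s \<in> S" for s
    proof -
      obtain c where "A *v s = c *\<^sub>R s" using eS \<open>s \<in> S\<close> by blast
      hence "inner s (A *v y) = c * inner s y"
        using symmetric_matrix_inner_commute[OF sym, of s y] by simp
      thus ?thesis using \<open>y \<in> U\<close> \<open>s \<in> S\<close> by (simp add: U_def orthogonal_def)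
    qed
    thus ?thesis by (simp add: U_def)
  qed
  moreover have "U \<noteq> {0}"
  proof -
    have "dim S \<le> card S" using fS by (intro dim_le_card) (auto intro: span_base)
    hence "dim S < DIM(real^'n)" using cS Suc.prems by simp
    then obtain y where "y \<noteq> 0" "\<And>z. z \<in> span S \<Longrightarrow> orthogonal y z"
      using orthogonal_to_subspace_exists by blast
    hence "y \<in> U" "y \<noteq> 0" by (auto simp: U_def orthogonal_commute intro: span_base)
    thus ?thesis by blast
  qed
  ultimately obtain x c where xU: "x \<in> U" and nx: "norm x = 1" and ex: "A *v x = c *\<^sub>R x"
    using symmetric_matrix_eigenvector_in_invariant_subspace[OF sym U] by metis
  have "x \<notin> S" using xU nx by (auto simp: U_def orthogonal_def)
  show ?case
  proof (intro exI conjI)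
    show "finite (insert x S)" "card (insert x S) = Suc k" using fS cS \<open>x \<notin> S\<close> by auto
    show "pairwise orthogonal (insert x S)"
      using oS xU by (auto simp: pairwise_insert U_def orthogonal_commute)
    show "\<forall>s\<in>insert x S. norm s = 1 \<and> (\<exists>c. A *v s = c *\<^sub>R s)" using eS nx ex by auto
  qed
qed

lemma symmetric_matrix_orthogonal_diagonalization:
  fixes A :: "real^'n^'n"
  assumes sym: "transpose A = A"
  obtains P :: "real^'n^'n" and l :: "'n \<Rightarrow> real"
  where "orthogonal_matrix P" "\<And>j. A *v column j P = l j *\<^sub>R column j P"
proof -
  obtain S where fS: "finite S" and cS: "card S = CARD('n)" and oS: "pairwise orthogonal S"
    and eS: "\<forall>s\<in>S. norm s = 1 \<and> (\<exists>c. A *v s = c *\<^sub>R s)"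
    using symmetric_matrix_orthonormal_eigenvectors[OF sym order_refl] by blast
  obtain h where h: "bij_betw h (UNIV::'n set) S"
    using finite_same_card_bij[of "UNIV::'n set" S] fS cS by auto
  define P :: "real^'n^'n" where "P = (\<chi> i j. h j $ i)"
  have col: "column j P = h j" for j by (simp add: P_def column_def)
  have hS: "h j \<in> S" for j using h by (auto simp: bij_betw_def)
  have "orthogonal_matrix P"
    unfolding orthogonal_matrix_orthonormal_columns col
    using eS hS oS h by (auto simp: pairwise_def bij_betw_def inj_def) metis
  moreover have "A *v column j P = (SOME c. A *v h j = c *\<^sub>R h j) *\<^sub>R column j P" for j
    unfolding col using eS hS[of j] by (metis (mono_tags, lifting) someI_ex)
  ultimately show ?thesis by (rule that)
qed

section \<open>Characteristic polynomial and nuclear norm\<close>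

lemma poly_char_poly: "poly (char_poly A) x = det (mat x - A)"
  unfolding char_poly_def det_def
  by (simp add: poly_sum poly_prod mat_def if_distrib[of "\<lambda>q. poly q x"] poly_pCons cong: if_cong)

lemma transpose_matrix_mult_component:
  "(transpose P ** Q) $ i $ j = inner (column i P) (column j (Q :: real^'n^'m))"
  by (simp add: matrix_matrix_mult_def transpose_def column_def inner_vec_def)

lemma column_matrix_mult: "column j (M ** P) = M *v column j P"
  by (simp add: matrix_matrix_mult_def matrix_vector_mult_def column_def vec_eq_iff)

lemma mat_matrix_vector_mult: "mat c *v v = c *\<^sub>R (v :: real^'n)"
  by (simp add: vec_eq_iff matrix_vector_mult_def mat_def if_distrib if_distribR cong: if_cong)

lemma orthogonal_matrix_column_inner:
  fixes P :: "real^'n^'n"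
  assumes "orthogonal_matrix P"
  shows "inner (column i P) (column j P) = (if i = j then 1 else 0)"
proof -
  have "(transpose P ** P) $ i $ j = (mat 1 :: real^'n^'n) $ i $ j"
    using assms by (simp add: orthogonal_matrix)
  thus ?thesis by (simp add: transpose_matrix_mult_component mat_def)
qed

lemma orthogonal_matrix_norm_column:
  fixes P :: "real^'n^'n"
  shows "orthogonal_matrix P \<Longrightarrow> norm (column j P) = 1"
  by (simp add: norm_eq_1 orthogonal_matrix_column_inner)

lemma char_poly_orthogonal_diagonalization:
  fixes A :: "real^'n^'n"
  assumes P: "orthogonal_matrix P" and ev: "\<And>j. A *v column j P = l j *\<^sub>R column j P"
  shows "char_poly A = (\<Prod>j\<in>UNIV. [:- l j, 1:])"
proof (rule poly_eq_poly_eq_iff[THEN iffD1], rule ext)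
  fix x
  have "transpose P ** ((mat x - A) ** P) = (\<chi> i j. if i = j then x - l j else 0)"
    by (simp add: vec_eq_iff transpose_matrix_mult_component column_matrix_mult mat_matrix_vector_mult
        matrix_vector_mult_diff_rdistrib ev inner_diff_right orthogonal_matrix_column_inner[OF P])
  hence "det (transpose P ** ((mat x - A) ** P)) = (\<Prod>j\<in>UNIV. x - l j)"
    by (simp add: det_diagonal)
  hence "det P * det P * det (mat x - A) = (\<Prod>j\<in>UNIV. x - l j)"
    by (simp add: det_mul ac_simps)
  moreover have "det P * det P = 1" using det_orthogonal_matrix[OF P] by auto
  ultimately have "det (mat x - A) = (\<Prod>j\<in>UNIV. x - l j)" by simp
  thus "poly (char_poly A) x = poly (\<Prod>j\<in>UNIV. [:- l j, 1:]) x"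
    by (simp add: poly_char_poly poly_prod)
qed

lemma order_prod_linear_factors:
  fixes l :: "'a \<Rightarrow> real"
  assumes "finite F"
  shows "order e (\<Prod>j\<in>F. [:- l j, 1:]) = card {j\<in>F. l j = e}"
  using assms
proof (induction F rule: finite_induct)
  case empty
  show ?case by (simp add: order_0I)
next
  case (insert a F)
  have "(\<Prod>j\<in>F. [:- l j, 1:]) \<noteq> 0" using insert.hyps(1) by (simp add: prod_zero_iff)
  hence nonzero: "[:- l a, 1:] * (\<Prod>j\<in>F. [:- l j, 1:]) \<noteq> 0" unfolding mult_eq_0_iff by simp
  have order_factor: "order e [:- l a, 1:] = (if l a = e then 1 else 0)"
    using order_power_n_n[of e 1] by (auto intro: order_0I)
  have card_insert: "card {j \<in> insert a F. l j = e} = (if l a = e then 1 else 0) + card {j\<in>F. l j = e}"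
  proof -
    have "{j \<in> insert a F. l j = e} = (if l a = e then insert a {j\<in>F. l j = e} else {j\<in>F. l j = e})"
      by auto
    thus ?thesis using insert.hyps by simp
  qed
  show ?case
    unfolding prod.insert[OF insert.hyps] order_mult[OF nonzero] order_factor card_insert insert.IH ..
qed

lemma nuclear_norm_eq_sum_sqrt_eigenvalues:
  fixes X :: "real^'n^'m"
  assumes P: "orthogonal_matrix P"
    and ev: "\<And>j. (transpose X ** X) *v column j P = l j *\<^sub>R column j P"
  shows "nuclear_norm X = (\<Sum>j\<in>UNIV. sqrt (l j))"
proof -
  define q where "q = (\<Prod>j\<in>UNIV. [:- l j, 1:])"
  have "char_poly (transpose X ** X) = q"
    unfolding q_def by (rule char_poly_orthogonal_diagonalization[OF P ev])
  moreover have "{x. poly q x = 0} = range l"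
    by (auto simp: q_def poly_prod prod_zero_iff)
  moreover have "order e q = card {j. l j = e}" for e
    unfolding q_def by (simp add: order_prod_linear_factors)
  ultimately have "nuclear_norm X = (\<Sum>e\<in>range l. real (card {j. l j = e}) * sqrt e)"
    by (simp add: nuclear_norm_def)
  also have "\<dots> = (\<Sum>e\<in>range l. \<Sum>j\<in>{j. l j = e}. sqrt (l j))"
    by (intro sum.cong refl) simp
  also have "\<dots> = (\<Sum>j\<in>UNIV. sqrt (l j))"
    using sum.image_gen[of "UNIV::'n set" "\<lambda>j. sqrt (l j)" l] by simp
  finally show ?thesis .
qed

section \<open>Outer products and the singular value decomposition\<close>

definition outer :: "real^'m \<Rightarrow> real^'n \<Rightarrow> real^'n^'m" where
  "outer u v = (\<chi> i j. u $ i * v $ j)"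

lemma factor_prod_eq_sum_outer: "factor_prod d u v = (\<Sum>k<d. outer (u k) (v k))"
  by (simp add: factor_prod_def outer_def)

lemma outer_scaleR_left: "outer (c *\<^sub>R u) v = c *\<^sub>R outer u v"
  by (simp add: outer_def vec_eq_iff)

lemma outer_scaleR_right: "outer u (c *\<^sub>R v) = c *\<^sub>R outer u v"
  by (simp add: outer_def vec_eq_iff)

lemma outer_zero_left [simp]: "outer 0 v = 0"
  by (simp add: outer_def vec_eq_iff)

lemma outer_sum_left: "finite F \<Longrightarrow> outer (\<Sum>i\<in>F. u i) v = (\<Sum>i\<in>F. outer (u i) v)"
  by (simp add: outer_def vec_eq_iff sum_component sum_distrib_right)

lemma outer_sum_right: "finite F \<Longrightarrow> outer u (\<Sum>i\<in>F. v i) = (\<Sum>i\<in>F. outer u (v i))"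
  by (simp add: outer_def vec_eq_iff sum_component sum_distrib_left)

lemma matrix_vector_mult_outer: "outer u v *v x = inner v x *\<^sub>R u"
  by (simp add: vec_eq_iff outer_def matrix_vector_mult_def inner_vec_def sum_distrib_left ac_simps)

lemma inner_outer: "inner W (outer u v) = inner u (W *v v)"
  by (simp add: outer_def inner_vec_def matrix_vector_mult_def sum_distrib_left ac_simps)

lemma sum_matrix_vector_mult:
  "finite F \<Longrightarrow> (\<Sum>j\<in>F. M j) *v x = (\<Sum>j\<in>F. M j *v (x :: real^'n))"
  by (induction F rule: finite_induct) (simp_all add: matrix_vector_mult_add_rdistrib)

lemma orthogonal_matrix_expansion:
  fixes P :: "real^'n^'n"
  assumes "orthogonal_matrix P"
  shows "(\<Sum>j\<in>UNIV. inner (column j P) v *\<^sub>R column j P) = v"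
proof -
  have "(transpose P *v v) $ j = inner (column j P) v" for j
    by (simp add: matrix_vector_mult_def transpose_def column_def inner_vec_def mult.commute)
  hence "P *v (transpose P *v v) = (\<Sum>j\<in>UNIV. inner (column j P) v *\<^sub>R column j P)"
    by (simp add: matrix_mult_sum scalar_mult_eq_scaleR)
  moreover have "P *v (transpose P *v v) = v"
    using assms unfolding orthogonal_matrix_def by (metis matrix_vector_mul_assoc matrix_vector_mul_lid)
  ultimately show ?thesis by simp
qed

lemma orthogonal_matrix_parseval:
  fixes P :: "real^'n^'n"
  assumes P: "orthogonal_matrix P"
  shows "(norm v)\<^sup>2 = (\<Sum>j\<in>UNIV. (inner (column j P) v)\<^sup>2)"
proof -
  have "(norm v)\<^sup>2 = (norm (\<Sum>j\<in>UNIV. inner (column j P) v *\<^sub>R column j P))\<^sup>2"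
    by (simp only: orthogonal_matrix_expansion[OF P])
  also have "\<dots> = (\<Sum>j\<in>UNIV. (norm (inner (column j P) v *\<^sub>R column j P))\<^sup>2)"
    by (rule norm_sum_Pythagorean)
      (auto simp: pairwise_def orthogonal_def orthogonal_matrix_column_inner[OF P])
  also have "\<dots> = (\<Sum>j\<in>UNIV. (inner (column j P) v)\<^sup>2)"
    using orthogonal_matrix_column_inner[OF P] by (simp add: norm_eq_sqrt_inner)
  finally show ?thesis .
qed

lemma matrix_eq_sum_outer_columns:
  fixes X :: "real^'n^'m" and P :: "real^'n^'n"
  assumes P: "orthogonal_matrix P"
  shows "X = (\<Sum>j\<in>UNIV. outer (X *v column j P) (column j P))"
proof (subst matrix_eq, intro allI)
  fix x
  have "(\<Sum>j\<in>UNIV. outer (X *v column j P) (column j P)) *v x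
      = (\<Sum>j\<in>UNIV. X *v (inner (column j P) x *\<^sub>R column j P))"
    by (simp add: sum_matrix_vector_mult matrix_vector_mult_outer matrix_vector_mult_scaleR)
  also have "\<dots> = X *v (\<Sum>j\<in>UNIV. inner (column j P) x *\<^sub>R column j P)"
    by (simp add: linear_sum[OF matrix_vector_mul_linear] o_def)
  also have "\<dots> = X *v x" by (simp only: orthogonal_matrix_expansion[OF P])
  finally show "X *v x = (\<Sum>j\<in>UNIV. outer (X *v column j P) (column j P)) *v x" ..
qed

lemma inner_matrix_vector_mult:
  fixes X :: "real^'n^'m"
  shows "inner (X *v x) (X *v y) = inner x ((transpose X ** X) *v y)"
  by (metis dot_lmul_matrix inner_commute matrix_vector_mul_assoc transpose_matrix_vector)

lemma nuclear_norm_outer_decomposition: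
  fixes X :: "real^'n^'m"
  obtains P :: "real^'n^'n" and w :: "'n \<Rightarrow> real^'m"
  where "orthogonal_matrix P" "\<And>i j. i \<noteq> j \<Longrightarrow> orthogonal (w i) (w j)"
    "X = (\<Sum>j\<in>UNIV. outer (w j) (column j P))" "nuclear_norm X = (\<Sum>j\<in>UNIV. norm (w j))"
proof -
  have "transpose (transpose X ** X) = transpose X ** X" by (simp add: matrix_transpose_mul)
  then obtain P :: "real^'n^'n" and l where P: "orthogonal_matrix P"
    and ev: "\<And>j. (transpose X ** X) *v column j P = l j *\<^sub>R column j P"
    using symmetric_matrix_orthogonal_diagonalization by blast
  define w where "w j = X *v column j P" for j
  have "inner (w i) (w j) = l j * (if i = j then 1 else 0)" for i j
    by (simp add: w_def inner_matrix_vector_mult ev orthogonal_matrix_column_inner[OF P])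
  hence "i \<noteq> j \<Longrightarrow> orthogonal (w i) (w j)" and "l j = (norm (w j))\<^sup>2" for i j
    by (simp_all add: orthogonal_def power2_norm_eq_inner)
  moreover have "nuclear_norm X = (\<Sum>j\<in>UNIV. norm (w j))"
    using nuclear_norm_eq_sum_sqrt_eigenvalues[OF P ev] by (simp add: \<open>\<And>j. l j = _\<close>)
  moreover have "X = (\<Sum>j\<in>UNIV. outer (w j) (column j P))"
    unfolding w_def by (rule matrix_eq_sum_outer_columns[OF P])
  ultimately show ?thesis by (intro that[OF P])
qed

section \<open>Duality and convexity of the nuclear norm\<close>

lemma contraction_sum_outer_columns:
  fixes P :: "real^'n^'n" and e :: "'n \<Rightarrow> real^'m"
  assumes P: "orthogonal_matrix P" and orth: "\<And>i j. i \<noteq> j \<Longrightarrow> orthogonal (e i) (e j)"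
    and le1: "\<And>j. norm (e j) \<le> 1"
  shows "norm ((\<Sum>j\<in>UNIV. outer (e j) (column j P)) *v v) \<le> norm v"
proof -
  have "(norm ((\<Sum>j\<in>UNIV. outer (e j) (column j P)) *v v))\<^sup>2
      = (\<Sum>j\<in>UNIV. (norm (inner (column j P) v *\<^sub>R e j))\<^sup>2)"
    using orth by (simp add: sum_matrix_vector_mult matrix_vector_mult_outer norm_sum_Pythagorean
        pairwise_def orthogonal_def)
  also have "\<dots> \<le> (\<Sum>j\<in>UNIV. (inner (column j P) v)\<^sup>2)"
    using le1 by (intro sum_mono) (simp add: power_mult_distrib mult_left_le power_le_one)
  also have "\<dots> = (norm v)\<^sup>2" by (rule orthogonal_matrix_parseval[OF P, symmetric])
  finally show ?thesis by (simp add: power2_le_iff_abs_le)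
qed

lemma inner_outer_le_of_contraction:
  assumes "\<And>x. norm (W *v x) \<le> norm x"
  shows "inner W (outer u v) \<le> norm u * norm v"
proof -
  have "inner W (outer u v) \<le> norm u * norm (W *v v)"
    unfolding inner_outer by (rule norm_cauchy_schwarz)
  also have "\<dots> \<le> norm u * norm v" by (intro mult_left_mono assms) simp
  finally show ?thesis .
qed

lemma inner_le_nuclear_norm_of_contraction:
  fixes X :: "real^'n^'m"
  assumes W: "\<And>x. norm (W *v x) \<le> norm x"
  shows "inner W X \<le> nuclear_norm X"
proof -
  obtain P :: "real^'n^'n" and w where P: "orthogonal_matrix P"
    and X: "X = (\<Sum>j\<in>UNIV. outer (w j) (column j P))"
    and N: "nuclear_norm X = (\<Sum>j\<in>UNIV. norm (w j))"
    using nuclear_norm_outer_decomposition[of X] by blast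
  have "inner W X = (\<Sum>j\<in>UNIV. inner W (outer (w j) (column j P)))"
    by (subst X) (simp add: inner_sum_right)
  also have "\<dots> \<le> (\<Sum>j\<in>UNIV. norm (w j) * norm (column j P))"
    by (intro sum_mono inner_outer_le_of_contraction W)
  also have "\<dots> = nuclear_norm X" by (simp add: N orthogonal_matrix_norm_column[OF P])
  finally show ?thesis .
qed

lemma nuclear_norm_dual_attained:
  fixes X :: "real^'n^'m"
  obtains W where "\<And>x. norm (W *v x) \<le> norm x" "inner W X = nuclear_norm X"
proof -
  obtain P :: "real^'n^'n" and w where P: "orthogonal_matrix P"
    and orth: "\<And>i j. i \<noteq> j \<Longrightarrow> orthogonal (w i) (w j)"
    and X: "X = (\<Sum>j\<in>UNIV. outer (w j) (column j P))"
    and N: "nuclear_norm X = (\<Sum>j\<in>UNIV. norm (w j))"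
    using nuclear_norm_outer_decomposition[of X] by blast
  define e where "e j = w j /\<^sub>R norm (w j)" for j
  define W where "W = (\<Sum>j\<in>UNIV. outer (e j) (column j P))"
  have "norm (W *v x) \<le> norm x" for x
    unfolding W_def
  proof (rule contraction_sum_outer_columns[OF P])
    show "orthogonal (e i) (e j)" if "i \<noteq> j" for i j
      using orth[OF that] by (simp add: e_def orthogonal_def)
    show "norm (e j) \<le> 1" for j by (cases "w j = 0") (simp_all add: e_def)
  qed
  moreover have "inner W X = nuclear_norm X"
  proof -
    have Xcol: "X *v column j P = w j" for j
      by (subst X) (simp add: sum_matrix_vector_mult matrix_vector_mult_outer
          orthogonal_matrix_column_inner[OF P] if_distrib if_distribR cong: if_cong)
    have "inner W X = inner X W" by (rule inner_commute)
    also have "\<dots> = (\<Sum>j\<in>UNIV. inner (e j) (w j))"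
      by (simp add: W_def inner_sum_right inner_outer Xcol)
    also have "\<dots> = nuclear_norm X"
      unfolding N
    proof (intro sum.cong refl)
      fix j
      show "inner (e j) (w j) = norm (w j)"
        by (cases "w j = 0") (simp_all add: e_def dot_square_norm power2_eq_square)
    qed
    finally show ?thesis .
  qed
  ultimately show ?thesis by (rule that)
qed

lemma nuclear_norm_nonneg: "0 \<le> nuclear_norm X"
  using inner_le_nuclear_norm_of_contraction[of 0 X] by simp

lemma nuclear_norm_sum_outer_le:
  assumes "finite F"
  shows "nuclear_norm (\<Sum>k\<in>F. outer (u k) (v k)) \<le> (\<Sum>k\<in>F. norm (u k) * norm (v k))"
proof -
  obtain W where W: "\<And>x. norm (W *v x) \<le> norm x"
    and N: "inner W (\<Sum>k\<in>F. outer (u k) (v k)) = nuclear_norm (\<Sum>k\<in>F. outer (u k) (v k))"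
    using nuclear_norm_dual_attained by blast
  have "inner W (\<Sum>k\<in>F. outer (u k) (v k)) \<le> (\<Sum>k\<in>F. norm (u k) * norm (v k))"
    unfolding inner_sum_right by (intro sum_mono inner_outer_le_of_contraction W)
  thus ?thesis by (simp add: N)
qed

lemma convex_on_nuclear_norm: "convex_on UNIV nuclear_norm"
proof (rule convex_onI)
  fix t :: real and X Y :: "real^'n^'m"
  assume t: "0 < t" "t < 1"
  obtain W where W: "\<And>x. norm (W *v x) \<le> norm x"
    and N: "inner W ((1 - t) *\<^sub>R X + t *\<^sub>R Y) = nuclear_norm ((1 - t) *\<^sub>R X + t *\<^sub>R Y)"
    using nuclear_norm_dual_attained by blast
  have "inner W ((1 - t) *\<^sub>R X + t *\<^sub>R Y) = (1 - t) * inner W X + t * inner W Y"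
    by (simp add: inner_add_right)
  also have "\<dots> \<le> (1 - t) * nuclear_norm X + t * nuclear_norm Y"
    using t inner_le_nuclear_norm_of_contraction[OF W] by (intro add_mono mult_left_mono) auto
  finally show "nuclear_norm ((1 - t) *\<^sub>R X + t *\<^sub>R Y) \<le> (1 - t) * nuclear_norm X + t * nuclear_norm Y"
    by (simp add: N)
qed simp

lemma convex_on_power2_nonneg:
  fixes f :: "'a::real_vector \<Rightarrow> real"
  assumes f: "convex_on S f" and nonneg: "\<And>x. x \<in> S \<Longrightarrow> 0 \<le> f x"
  shows "convex_on S (\<lambda>x. (f x)\<^sup>2)"
proof (rule convex_onI)
  show "convex S" using f by (rule convex_on_imp_convex)
  fix t :: real and x y
  assume t: "0 < t" "t < 1" and xy: "x \<in> S" "y \<in> S"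
  have "(1 - t) *\<^sub>R x + t *\<^sub>R y \<in> S"
    using convex_on_imp_convex[OF f] xy t by (simp add: convex_alt)
  hence "(f ((1 - t) *\<^sub>R x + t *\<^sub>R y))\<^sup>2 \<le> ((1 - t) * f x + t * f y)\<^sup>2"
    using convex_onD[OF f, of t x y] t xy nonneg by (intro power_mono) auto
  also have "\<dots> \<le> (1 - t) * (f x)\<^sup>2 + t * (f y)\<^sup>2"
    using convex_onD[OF convex_power2, of t "f x" "f y"] t by simp
  finally show "(f ((1 - t) *\<^sub>R x + t *\<^sub>R y))\<^sup>2 \<le> (1 - t) * (f x)\<^sup>2 + t * (f y)\<^sup>2" .
qed

lemma lower_convex_envelope_convex:
  assumes "convex_on UNIV f"
  shows "lower_convex_envelope f = f"
proof
  fix x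
  let ?G = "{g. convex_on UNIV g \<and> (\<forall>y. g y \<le> f y)}"
  show "lower_convex_envelope f x = f x"
    unfolding lower_convex_envelope_def
  proof (rule cSup_eq_maximum)
    show "f x \<in> (\<lambda>g. g x) ` ?G" using assms by force
  qed auto
qed

section \<open>The dropout regularizer\<close>

lemma theta_odds:
  assumes p: "0 < p" "p \<le> 1"
  shows "(1 - theta p d) / theta p d = real d * (1 - p) / p"
proof -
  define q where "q = real d - (real d - 1) * p"
  have q_eq: "q = real d * (1 - p) + p" by (simp add: q_def algebra_simps)
  hence "q > 0" using p by (simp add: add_nonneg_pos)
  hence "(1 - theta p d) / theta p d = (q - p) / p"
    using p unfolding theta_def q_def[symmetric] by (simp add: field_simps)
  thus ?thesis by (simp add: q_eq)
qed

lemma nuclear_norm_sq_le_dropout: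
  "(nuclear_norm (factor_prod d u v))\<^sup>2 \<le> real d * omega_dropout d u v"
proof -
  have "(nuclear_norm (factor_prod d u v))\<^sup>2 \<le> (\<Sum>k<d. norm (u k) * norm (v k))\<^sup>2"
    unfolding factor_prod_eq_sum_outer
    by (intro power_mono nuclear_norm_sum_outer_le nuclear_norm_nonneg) simp
  also have "\<dots> \<le> real d * (\<Sum>k<d. (norm (u k) * norm (v k))\<^sup>2)"
    using sum_squared_le_sum_of_squares[of "\<lambda>k. norm (u k) * norm (v k)" "{..<d}"]
    by (simp add: mult.commute)
  finally show ?thesis by (simp add: omega_dropout_def power_mult_distrib)
qed

text \<open>The sign vectors in \<open>{-1, 1}\<^sup>n\<close>, indexed by their sets of negative coordinates.\<close>

definition sign_flip :: "'n \<Rightarrow> 'n set \<Rightarrow> real" where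
  "sign_flip j K = (if j \<in> K then -1 else 1)"

lemma sign_flip_mult_self: "sign_flip j K * sign_flip j K = 1"
  by (simp add: sign_flip_def)

lemma abs_sign_flip: "\<bar>sign_flip j K\<bar> = 1"
  by (simp add: sign_flip_def)

lemma sum_sign_flip_mult:
  fixes i j :: "'n::finite"
  shows "(\<Sum>K\<in>UNIV. sign_flip i K * sign_flip j K) = (if i = j then real CARD('n set) else 0)"
proof (cases "i = j")
  case True
  thus ?thesis by (simp add: sign_flip_mult_self)
next
  case False
  define toggle where "toggle K = (if i \<in> K then K - {i} else insert i K)" for K :: "'n set"
  have "(\<Sum>K\<in>UNIV. - (sign_flip i K * sign_flip j K)) = (\<Sum>K\<in>UNIV. sign_flip i K * sign_flip j K)"
    by (rule sum.reindex_bij_witness[of _ toggle toggle]) (use False in \<open>auto simp: toggle_def sign_flip_def\<close>)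
  hence "(\<Sum>K\<in>UNIV. sign_flip i K * sign_flip j K) = 0" by (simp add: sum_negf)
  thus ?thesis using False by simp
qed

lemma sum_outer_sign_flip_combinations:
  fixes a :: "'n::finite \<Rightarrow> real^'m" and b :: "'n \<Rightarrow> real^'k"
  shows "(\<Sum>K\<in>UNIV. outer (\<Sum>i\<in>UNIV. sign_flip i K *\<^sub>R a i) (\<Sum>j\<in>UNIV. sign_flip j K *\<^sub>R b j))
    = real CARD('n set) *\<^sub>R (\<Sum>j\<in>UNIV. outer (a j) (b j))"
proof -
  have "outer (\<Sum>i\<in>UNIV. sign_flip i K *\<^sub>R a i) (\<Sum>j\<in>UNIV. sign_flip j K *\<^sub>R b j)
      = (\<Sum>i\<in>UNIV. \<Sum>j\<in>UNIV. (sign_flip i K * sign_flip j K) *\<^sub>R outer (a i) (b j))" for K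
    by (subst outer_sum_left) (simp_all add: outer_sum_right outer_scaleR_left outer_scaleR_right
        scaleR_sum_right)
  hence "(\<Sum>K\<in>UNIV. outer (\<Sum>i\<in>UNIV. sign_flip i K *\<^sub>R a i) (\<Sum>j\<in>UNIV. sign_flip j K *\<^sub>R b j))
      = (\<Sum>K\<in>UNIV. \<Sum>i\<in>UNIV. \<Sum>j\<in>UNIV. (sign_flip i K * sign_flip j K) *\<^sub>R outer (a i) (b j))"
    by simp
  also have "\<dots> = (\<Sum>i\<in>UNIV. \<Sum>j\<in>UNIV. \<Sum>K\<in>UNIV. (sign_flip i K * sign_flip j K) *\<^sub>R outer (a i) (b j))"
    by (subst sum.swap) (rule sum.cong[OF refl], rule sum.swap)
  also have "\<dots> = real CARD('n set) *\<^sub>R (\<Sum>j\<in>UNIV. outer (a j) (b j))"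
    by (simp add: scaleR_sum_left[symmetric] sum_sign_flip_mult scaleR_sum_right if_distrib if_distribR
        cong: if_cong)
  finally show ?thesis .
qed

lemma norm_sign_flip_combination:
  assumes "\<And>i j. i \<noteq> j \<Longrightarrow> orthogonal (a i) (a j)"
  shows "(norm (\<Sum>j\<in>UNIV. sign_flip j K *\<^sub>R a j))\<^sup>2 = (\<Sum>j\<in>(UNIV :: 'n::finite set). (norm (a j))\<^sup>2)"
proof -
  have "(norm (\<Sum>j\<in>UNIV. sign_flip j K *\<^sub>R a j))\<^sup>2 = (\<Sum>j\<in>UNIV. (norm (sign_flip j K *\<^sub>R a j))\<^sup>2)"
    using assms by (intro norm_sum_Pythagorean) (auto simp: pairwise_def orthogonal_def)
  also have "\<dots> = (\<Sum>j\<in>UNIV. (norm (a j))\<^sup>2)" by (simp add: abs_sign_flip)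
  finally show ?thesis .
qed

lemma nuclear_norm_balanced_decomposition:
  fixes X :: "real^'n^'m"
  obtains a :: "'n \<Rightarrow> real^'m" and b :: "'n \<Rightarrow> real^'n"
  where "\<And>i j. i \<noteq> j \<Longrightarrow> orthogonal (a i) (a j)" "\<And>i j. i \<noteq> j \<Longrightarrow> orthogonal (b i) (b j)"
    "X = (\<Sum>j\<in>UNIV. outer (a j) (b j))"
    "(\<Sum>j\<in>UNIV. (norm (a j))\<^sup>2) = nuclear_norm X" "(\<Sum>j\<in>UNIV. (norm (b j))\<^sup>2) = nuclear_norm X"
proof -
  obtain P :: "real^'n^'n" and w where P: "orthogonal_matrix P"
    and orth: "\<And>i j. i \<noteq> j \<Longrightarrow> orthogonal (w i) (w j)"
    and X: "X = (\<Sum>j\<in>UNIV. outer (w j) (column j P))"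
    and N: "nuclear_norm X = (\<Sum>j\<in>UNIV. norm (w j))"
    using nuclear_norm_outer_decomposition[of X] by blast
  define a where "a j = w j /\<^sub>R sqrt (norm (w j))" for j
  define b where "b j = sqrt (norm (w j)) *\<^sub>R column j P" for j
  have orth_a: "orthogonal (a i) (a j)" if "i \<noteq> j" for i j
    using orth[OF that] by (simp add: a_def orthogonal_def)
  have orth_b: "orthogonal (b i) (b j)" if "i \<noteq> j" for i j
    using that by (simp add: b_def orthogonal_def orthogonal_matrix_column_inner[OF P])
  have "outer (a j) (b j) = outer (w j) (column j P)" for j
    by (cases "w j = 0") (simp_all add: a_def b_def outer_scaleR_left outer_scaleR_right)
  hence decomp: "X = (\<Sum>j\<in>UNIV. outer (a j) (b j))" by (simp add: X)
  have norm_a: "(norm (a j))\<^sup>2 = norm (w j)" for j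
  proof -
    have "(norm (a j))\<^sup>2 = (norm (w j))\<^sup>2 / (sqrt (norm (w j)))\<^sup>2"
      by (simp add: a_def divide_inverse power_mult_distrib power_inverse)
    also have "\<dots> = norm (w j)" by (simp add: power2_eq_square)
    finally show ?thesis .
  qed
  have norm_b: "(norm (b j))\<^sup>2 = norm (w j)" for j
    by (simp add: b_def orthogonal_matrix_norm_column[OF P])
  show ?thesis by (rule that[OF orth_a orth_b decomp]) (simp_all add: N norm_a norm_b)
qed

lemma factor_prod_omega_dropout_reindex:
  assumes "bij_betw g {..<d} I"
  shows "factor_prod d (u \<circ> g) (v \<circ> g) = (\<Sum>k\<in>I. outer (u k) (v k))"
    and "omega_dropout d (u \<circ> g) (v \<circ> g) = (\<Sum>k\<in>I. (norm (u k))\<^sup>2 * (norm (v k))\<^sup>2)"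
  using sum.reindex_bij_betw[OF assms, of "\<lambda>k. outer (u k) (v k)"]
    sum.reindex_bij_betw[OF assms, of "\<lambda>k. (norm (u k))\<^sup>2 * (norm (v k))\<^sup>2"]
  by (simp_all add: factor_prod_eq_sum_outer omega_dropout_def)

lemma dropout_factorization_attaining_nuclear_norm:
  fixes X :: "real^'n^'m"
  obtains d u v where "1 \<le> d" "rank X \<le> d" "factor_prod d u v = X"
    "real d * omega_dropout d u v = (nuclear_norm X)\<^sup>2"
proof -
  obtain a :: "'n \<Rightarrow> real^'m" and b :: "'n \<Rightarrow> real^'n"
    where oa: "\<And>i j. i \<noteq> j \<Longrightarrow> orthogonal (a i) (a j)"
      and ob: "\<And>i j. i \<noteq> j \<Longrightarrow> orthogonal (b i) (b j)"
      and X: "X = (\<Sum>j\<in>UNIV. outer (a j) (b j))"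
      and Na: "(\<Sum>j\<in>UNIV. (norm (a j))\<^sup>2) = nuclear_norm X"
      and Nb: "(\<Sum>j\<in>UNIV. (norm (b j))\<^sup>2) = nuclear_norm X"
    using nuclear_norm_balanced_decomposition[of X] by blast
  define D where "D = CARD('n set)"
  have D: "real D > 0" by (simp add: D_def)
  define U where "U K = (1 / sqrt D) *\<^sub>R (\<Sum>j\<in>UNIV. sign_flip j K *\<^sub>R a j)" for K
  define V where "V K = (1 / sqrt D) *\<^sub>R (\<Sum>j\<in>UNIV. sign_flip j K *\<^sub>R b j)" for K
  have UV: "(\<Sum>K\<in>UNIV. outer (U K) (V K)) = X"
    using D by (simp add: U_def V_def outer_scaleR_left outer_scaleR_right scaleR_sum_right[symmetric]
        sum_outer_sign_flip_combinations D_def X)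
  have "(norm (U K))\<^sup>2 = nuclear_norm X / D" and "(norm (V K))\<^sup>2 = nuclear_norm X / D" for K
    using D by (simp_all add: U_def V_def power_mult_distrib power_divide
        norm_sign_flip_combination[OF oa] norm_sign_flip_combination[OF ob] Na Nb)
  hence "(\<Sum>K\<in>UNIV. (norm (U K))\<^sup>2 * (norm (V K))\<^sup>2) = real D * (nuclear_norm X / D)\<^sup>2"
    by (simp add: D_def power2_eq_square)
  hence omega: "real D * (\<Sum>K\<in>UNIV. (norm (U K))\<^sup>2 * (norm (V K))\<^sup>2) = (nuclear_norm X)\<^sup>2"
    using D by (simp add: power_divide power2_eq_square)
  obtain g where g: "bij_betw g {..<D} (UNIV :: 'n set set)"
    using ex_bij_betw_nat_finite[of "UNIV :: 'n set set"] by (auto simp: D_def lessThan_atLeast0)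
  have "rank X \<le> D"
  proof -
    have "rank X \<le> CARD('n)" using rank_bound[of X] by simp
    also have "\<dots> \<le> D" by (simp add: D_def less_exp less_imp_le)
    finally show ?thesis .
  qed
  moreover have "1 \<le> D" using D by simp
  ultimately show ?thesis
    using that[of D "U \<circ> g" "V \<circ> g"] D
    by (simp add: factor_prod_omega_dropout_reindex[OF g] UV omega)
qed

lemma Lambda_eq_nuclear_norm_sq:
  fixes X :: "real^'n^'m"
  assumes p: "0 < p" "p < 1"
  shows "Lambda p X = (1 - p) / p * (nuclear_norm X)\<^sup>2"
  unfolding Lambda_def
proof (rule cInf_eq_minimum)
  have odds: "(1 - theta p d) / theta p d * omega_dropout d u v = (1 - p) / p * (real d * omega_dropout d u v)"
    for d and u :: "nat \<Rightarrow> real^'m" and v :: "nat \<Rightarrow> real^'n"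
    using p by (simp add: theta_odds)
  obtain d u v where "1 \<le> d" "rank X \<le> d" "factor_prod d u v = X"
    "real d * omega_dropout d u v = (nuclear_norm X)\<^sup>2"
    by (rule dropout_factorization_attaining_nuclear_norm)
  thus "(1 - p) / p * (nuclear_norm X)\<^sup>2 \<in> {(1 - theta p d) / theta p d * omega_dropout d u v
      | d u v. d \<ge> 1 \<and> d \<ge> rank X \<and> factor_prod d u v = X}"
    unfolding odds by force
  fix y
  assume "y \<in> {(1 - theta p d) / theta p d * omega_dropout d u v
      | d u v. d \<ge> 1 \<and> d \<ge> rank X \<and> factor_prod d u v = X}"
  then obtain d u v where "y = (1 - p) / p * (real d * omega_dropout d u v)" "factor_prod d u v = X"
    unfolding odds by blast
  thus "(1 - p) / p * (nuclear_norm X)\<^sup>2 \<le> y"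
    using p nuclear_norm_sq_le_dropout[of d u v] by (auto intro!: divide_right_mono mult_left_mono)
qed

theorem proposition2:
  fixes p :: real
  assumes "0 < p" and "p < 1"
  shows "lower_convex_envelope (Lambda p :: real^'n^'m \<Rightarrow> real)
           = (\<lambda>X. (1 - p) / p * (nuclear_norm X)\<^sup>2)"
proof -
  have "Lambda p = (\<lambda>X :: real^'n^'m. (1 - p) / p * (nuclear_norm X)\<^sup>2)"
    using assms by (simp add: Lambda_eq_nuclear_norm_sq fun_eq_iff)
  moreover have "convex_on UNIV (\<lambda>X :: real^'n^'m. (1 - p) / p * (nuclear_norm X)\<^sup>2)"
    using assms by (intro convex_on_cmul convex_on_power2_nonneg convex_on_nuclear_norm nuclear_norm_nonneg)
      simp_all
  ultimately show ?thesis by (simp add: lower_convex_envelope_convex)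
qed

end
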